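(* Assume Conditions A, B, C and D (defined in the context) and let $t_n=f_ng_n$, $r_n=f_n/b_n$. Then for any $a,d>0$ and $T>0$, for any $\delta>0$, for $P$-a.e. environment $\boldsymbol{\tau}$, for all $n$ large enough, $$\mathbb{E}\Big[\sum_{i=0}^{Tr_n}\tau_{Y_n(i)}e_i\mathbf{1}\{Y_n(i)\in T^a(n)\}\,\Big|\,\boldsymbol{\tau}\Big]\le(a+d)^{1/\alpha_n}t_n .$$
   Context: Setting. For each $n$, $\mathcal{G}_n=(\mathcal{V}_n,\mathcal{E}_n)$ is a finite connected graph with fixed vertex $0$; depths $\tau_x>0$ random with law $P_n$, independent across $n$ on a common space with law $P$. Given $\boldsymbol{\tau}$, $Y_n$ is simple random walk on $\mathcal{G}_n$ from $0$ with law $\mathbb{P}$ and expectation $\mathbb{E}$ ($\mathbb{P}_x,\mathbb{E}_x$ from $x$); $(e_i)_{i\ge0}$ i.i.d. Exp(1) independent of everything. $H_n(A)=\inf\{i\ge0:Y_n(i)\in A\}$, $G^n_T(x,y)=\mathbb{E}_x[\sum_{i=0}^{T-1}\mathbf{1}\{Y_n(i)=y\}]$, $G^n_A=G^n_{H_n(A)}$; percolation cloud of density $\rho$: vertices included independently with probability $\rho$. Condition A: $(\tau_x)_x$ i.i.d. for each $n$; there are $\alpha_n,b_n\to0$, $g_n\to\infty$ with $b_n^{-1}P_n(\tau_x\ge u^{1/\alpha_n}g_n)\to1/u$ uniformly on compacts of $(0,\infty)$, and $P_n(\tau_x\ge u^{1/\alpha_n}dg_n)\le Cb_n/(ud^{\alpha_n})$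 for all $u,d>0,n$. Condition B: there are $f_n\to\infty$, $\mathcal{K}_G$ such that for every $\rho>0$ and percolation clouds $A_n$ of density $\rho b_n$, a.s. $\max_{x\in A_n}|f_n^{-1}G^n_{A_n\setminus\{x\}}(x,x)-\mathcal{K}_G|\to0$. Condition C: with $r_n=f_n/b_n$, there is $\mathcal{K}_r>0$ with, for all $s>0$, a.s. $\max_{x\in A_n\cup\{0\}}|\mathbb{E}_x[e^{-sH_n(A_n\setminus\{x\})/r_n}]-\mathcal{K}_r\rho/(s+\mathcal{K}_r\rho)|\to0$. Condition D: (i) there are $\lambda_n,\mathcal{K}_s>0$ with $\sum_x(e^{\lambda_nG^n_{Tr_n}(0,x)}-1)\le\mathcal{K}_s\lambda_nTr_n$ for all $T>0$, $n$ large, and $\sum_ne^{-c\lambda_nf_n}<\infty$ for some $c>0$; (ii) $\alpha_n\log f_n\to0$. Shallow traps: $T^a(n)=\{x\in\mathcal{V}_n:\tau_x<a^{1/\alpha_n}g_n\}$. *)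

theory Defs
  imports "HOL-Probability.Probability"
begin

definition nbrs :: "'v set \<Rightarrow> ('v \<Rightarrow> 'v \<Rightarrow> bool) \<Rightarrow> 'v \<Rightarrow> 'v set" where
  "nbrs V E x = {y \<in> V. E x y}"

definition srw_step :: "'v set \<Rightarrow> ('v \<Rightarrow> 'v \<Rightarrow> bool) \<Rightarrow> 'v \<Rightarrow> 'v pmf" where
  "srw_step V E x = (if nbrs V E x = {} then return_pmf x else pmf_of_set (nbrs V E x))"

fun walk_path :: "'v set \<Rightarrow> ('v \<Rightarrow> 'v \<Rightarrow> bool) \<Rightarrow> 'v \<Rightarrow> nat \<Rightarrow> 'v list pmf" where
  "walk_path V E x 0 = return_pmf [x]"
| "walk_path V E x (Suc k) =
     bind_pmf (walk_path V E x k) (\<lambda>p. map_pmf (\<lambda>y. p @ [y]) (srw_step V E (last p)))"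

definition green :: "'v set \<Rightarrow> ('v \<Rightarrow> 'v \<Rightarrow> bool) \<Rightarrow> real \<Rightarrow> 'v \<Rightarrow> 'v \<Rightarrow> real" where
  "green V E t x y = (\<Sum>i\<in>{i::nat. real i < t}.
       measure_pmf.prob (walk_path V E x i) {p. p ! i = y})"

definition green_hit :: "'v set \<Rightarrow> ('v \<Rightarrow> 'v \<Rightarrow> bool) \<Rightarrow> 'v set \<Rightarrow> 'v \<Rightarrow> 'v \<Rightarrow> ennreal" where
  "green_hit V E A x y = (\<Sum>k. ennreal (measure_pmf.prob (walk_path V E x k)
       {p. p ! k = y \<and> (\<forall>j\<le>k. p ! j \<notin> A)}))"

text \<open>Laplace transform E_x[exp(-theta H(A))], with exp(-theta * infinity) = 0.\<close>
definition hit_laplace :: "'v set \<Rightarrow> ('v \<Rightarrow> 'v \<Rightarrow> bool) \<Rightarrow> 'v set \<Rightarrow> 'v \<Rightarrow> real \<Rightarrow> real" where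
  "hit_laplace V E A x \<theta> = (\<Sum>k. measure_pmf.prob (walk_path V E x k)
       {p. p ! k \<in> A \<and> (\<forall>j<k. p ! j \<notin> A)} * exp (- \<theta> * real k))"

text \<open>Percolation clouds: for each n, vertex x is in A_n independently with probability
  rho * b n (independent also across n), realised on a canonical product space.\<close>
definition cloud_space :: "(nat \<Rightarrow> real) \<Rightarrow> real \<Rightarrow> (nat \<times> 'v \<Rightarrow> bool) measure" where
  "cloud_space b \<rho> = PiM (UNIV :: (nat \<times> 'v) set)
       (\<lambda>nx. measure_pmf (bernoulli_pmf (\<rho> * b (fst nx))))"

definition cloud :: "(nat \<Rightarrow> 'v set) \<Rightarrow> (nat \<times> 'v \<Rightarrow> bool) \<Rightarrow> nat \<Rightarrow> 'v set" where
  "cloud V \<omega> n = {x \<in> V n. \<omega> (n, x)}"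

definition exp_clocks :: "(nat \<Rightarrow> real) measure" where
  "exp_clocks = PiM (UNIV :: nat set) (\<lambda>_. density lborel (exponential_density 1))"

definition shallow :: "'v set \<Rightarrow> ('v \<Rightarrow> real) \<Rightarrow> real \<Rightarrow> real \<Rightarrow> real \<Rightarrow> 'v set" where
  "shallow V \<tau> \<alpha> g a = {x \<in> V. \<tau> x < a powr (1 / \<alpha>) * g}"

definition trap_sum_exp :: "'v set \<Rightarrow> ('v \<Rightarrow> 'v \<Rightarrow> bool) \<Rightarrow> 'v \<Rightarrow> ('v \<Rightarrow> real) \<Rightarrow> 'v set \<Rightarrow> nat \<Rightarrow> real" where
  "trap_sum_exp V E x0 \<tau> S N = measure_pmf.expectation (walk_path V E x0 N)
     (\<lambda>p. integral\<^sup>L exp_clocks (\<lambda>e. \<Sum>i\<le>N. \<tau> (p ! i) * e i * indicator S (p ! i)))"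

end

(*
  Integrating out the clocks, the expected shallow-trap sum is sum_y tau_y 1{tau_y < A_n} G_n(y),
  where A_n = a^(1/alpha_n) g_n and G_n(y) is the expected number of visits to y up to time
  T r_n.  Write tau_y 1{tau_y < A_n} = A_n X_y: the X_y are independent and [0,1]-valued, and the
  uniform tail bound of Condition A gives P(X_y >= s) <= (C b_n / a) s^(-alpha_n), so that, once
  alpha_n <= 1/2, a dyadic layer-cake estimate yields E X_y <= 4 C b_n / a.  A Chernoff bound with
  the parameter lambda_n of Condition D(i), applied at time 2 T r_n, then gives
    P(sum_y G_n(y) X_y >= M_n f_n) <= exp((K - M_n) lambda_n f_n),   M_n = ((a + d) / a)^(1/alpha_n),
  for a constant K.  Since alpha_n -> 0, M_n -> infinity, so these probabilities are eventually
  bounded by the summable exp(-c lambda_n f_n), and Borel-Cantelli shows that almost surely,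
  eventually, the shallow-trap sum is at most A_n M_n f_n = (a + d)^(1/alpha_n) f_n g_n.
*)

theory Submission
  imports Defs
begin

lemma length_walk_path: "p \<in> set_pmf (walk_path V E x k) \<Longrightarrow> length p = Suc k"
  by (induction k arbitrary: p) auto

lemma map_pmf_nth_walk_path:
  assumes "i \<le> k"
  shows "map_pmf (\<lambda>p. p ! i) (walk_path V E x k) = map_pmf (\<lambda>p. p ! i) (walk_path V E x i)"
  using assms
proof (induction k)
  case (Suc k)
  show ?case
  proof (cases "i = Suc k")
    case False
    with Suc.prems have ik: "i \<le> k" by simp
    have "map_pmf (\<lambda>p. p ! i) (walk_path V E x (Suc k)) =
      bind_pmf (walk_path V E x k) (\<lambda>p. map_pmf (\<lambda>y. (p @ [y]) ! i) (srw_step V E (last p)))"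
      by (simp add: map_bind_pmf map_pmf_comp)
    also have "\<dots> = bind_pmf (walk_path V E x k) (\<lambda>p. return_pmf (p ! i))"
    proof (rule bind_pmf_cong[OF refl])
      fix p assume "p \<in> set_pmf (walk_path V E x k)"
      with ik have "\<And>y. (p @ [y]) ! i = p ! i"
        by (simp add: nth_append length_walk_path)
      then show "map_pmf (\<lambda>y. (p @ [y]) ! i) (srw_step V E (last p)) = return_pmf (p ! i)"
        by (simp add: map_pmf_const)
    qed
    also have "\<dots> = map_pmf (\<lambda>p. p ! i) (walk_path V E x k)"
      by (simp add: map_pmf_def)
    finally show ?thesis using Suc.IH ik by simp
  qed simp
qed simp

lemma prob_walk_path_nth:
  "i \<le> k \<Longrightarrow> measure_pmf.prob (walk_path V E x k) {p. p ! i = y}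
     = measure_pmf.prob (walk_path V E x i) {p. p ! i = y}"
  using arg_cong[OF map_pmf_nth_walk_path, of i k "\<lambda>M. measure_pmf.prob M {y}" V E x]
  by (simp add: vimage_def)

lemma expectation_walk_path_nth:
  assumes "finite U" and "\<And>y. y \<notin> U \<Longrightarrow> h y = 0" and "i \<le> k"
  shows "measure_pmf.expectation (walk_path V E x k) (\<lambda>p. h (p ! i))
           = (\<Sum>y\<in>U. h y * measure_pmf.prob (walk_path V E x i) {p. p ! i = y})"
proof -
  have h_eq_sum: "h (p ! i) = (\<Sum>y\<in>U. h y * indicator {p. p ! i = y} p)" for p
  proof (cases "p ! i \<in> U")
    case True
    then have "(\<Sum>y\<in>U. h y * indicator {p. p ! i = y} p)
                 = (\<Sum>y\<in>{p ! i}. h y * indicator {p. p ! i = y} p)"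
      by (intro sum.mono_neutral_right) (auto simp: assms(1))
    then show ?thesis by simp
  qed (auto simp: assms(2) indicator_def intro!: sum.neutral)
  have "measure_pmf.expectation (walk_path V E x k) (\<lambda>p. h (p ! i))
          = measure_pmf.expectation (walk_path V E x k)
              (\<lambda>p. \<Sum>y\<in>U. h y * indicator {p. p ! i = y} p)"
    by (simp only: h_eq_sum)
  also have "\<dots> = (\<Sum>y\<in>U. h y * measure_pmf.prob (walk_path V E x k) {p. p ! i = y})"
    by (subst Bochner_Integration.integral_sum)
       (auto intro!: measure_pmf.integrable_const_bound[where B=1])
  also have "\<dots> = (\<Sum>y\<in>U. h y * measure_pmf.prob (walk_path V E x i) {p. p ! i = y})"
    by (simp only: prob_walk_path_nth[OF assms(3)])
  finally show ?thesis .
qed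

lemma finite_nat_less_real: "finite {i::nat. real i < t}"
  by (rule finite_subset[of _ "{..nat \<lceil>t\<rceil>}"]) (auto, linarith)

lemma green_Suc_eq:
  "green V E (real N + 1) x y = (\<Sum>i\<le>N. measure_pmf.prob (walk_path V E x i) {p. p ! i = y})"
proof -
  have "{i::nat. real i < real N + 1} = {..N}" by auto
  then show ?thesis by (simp add: green_def)
qed

lemma green_mono:
  assumes "\<And>i::nat. real i < t \<Longrightarrow> real i < t'"
  shows "green V E t x y \<le> green V E t' x y"
  unfolding green_def using assms
  by (intro sum_mono2[OF finite_nat_less_real]) auto

lemma green_Suc_le:
  assumes "real N < t"
  shows "green V E (real N + 1) x y \<le> green V E t x y"
proof (rule green_mono)
  fix i :: nat assume "real i < real N + 1"
  then have "i \<le> N" by linarith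
  with assms show "real i < t" by linarith
qed

lemma exponential_1_prob_space: "prob_space (density lborel (exponential_density (1::real)))"
  by (rule prob_space_exponential_density) simp

lemma exponential_1_mean:
  "integrable (density lborel (exponential_density (1::real))) (\<lambda>x. x) \<and>
   integral\<^sup>L (density lborel (exponential_density (1::real))) (\<lambda>x. x) = 1"
proof -
  interpret prob_space "density lborel (exponential_density (1::real))"
    by (rule exponential_1_prob_space)
  have "distributed (density lborel (exponential_density (1::real))) lborel (\<lambda>x. x)
          (exponential_density 1)"
    unfolding distributed_def by (auto simp: exponential_density_nonneg distr_id2)
  then have mean: "expectation (\<lambda>x. x) = 1"
    using exponential_distributed_expectation[of 1] by simp
  then have "integrable (density lborel (exponential_density (1::real))) (\<lambda>x. x)"
    using not_integrable_integral_eq by fastforce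
  with mean show ?thesis by simp
qed

lemma exp_clocks_component:
  "integrable exp_clocks (\<lambda>e. e i) \<and> integral\<^sup>L exp_clocks (\<lambda>e. e i) = 1"
proof -
  have distr_component: "distr exp_clocks (density lborel (exponential_density (1::real))) (\<lambda>e. e i)
      = density lborel (exponential_density 1)"
    unfolding exp_clocks_def by (rule distr_PiM_component) (auto intro: exponential_1_prob_space)
  have meas: "(\<lambda>e. e i) \<in> measurable exp_clocks (density lborel (exponential_density (1::real)))"
    unfolding exp_clocks_def by simp
  have "integrable exp_clocks (\<lambda>e. e i)"
    using integrable_distr_eq[OF meas, of "\<lambda>x. x"] distr_component exponential_1_mean by simp
  moreover have "integral\<^sup>L exp_clocks (\<lambda>e. e i) = 1"
    using integral_distr[OF meas, of "\<lambda>x. x"] distr_component exponential_1_mean by simp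
  ultimately show ?thesis ..
qed

lemma integral_exp_clocks_sum:
  "integral\<^sup>L exp_clocks (\<lambda>e. \<Sum>i\<le>N. c i * e i) = (\<Sum>i\<le>N. c i)"
proof -
  have "integral\<^sup>L exp_clocks (\<lambda>e. \<Sum>i\<le>N. c i * e i)
          = (\<Sum>i\<le>N. integral\<^sup>L exp_clocks (\<lambda>e. c i * e i))"
    by (rule Bochner_Integration.integral_sum) (simp add: exp_clocks_component)
  also have "\<dots> = (\<Sum>i\<le>N. c i)"
    by (simp add: exp_clocks_component)
  finally show ?thesis .
qed

lemma trap_sum_exp_eq_green:
  assumes "finite V" and "S \<subseteq> V"
  shows "trap_sum_exp V E x0 \<tau> S N = (\<Sum>y\<in>V. \<tau> y * indicator S y * green V E (real N + 1) x0 y)"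
proof -
  define h where "h y = \<tau> y * indicator S y" for y
  have h_outside: "y \<notin> V \<Longrightarrow> h y = 0" for y
    using assms(2) by (auto simp: h_def indicator_def)
  have h_bound: "\<bar>h z\<bar> \<le> (\<Sum>y\<in>V. \<bar>h y\<bar>)" for z
    by (cases "z \<in> V") (auto simp: h_outside assms(1) intro: member_le_sum)
  have "trap_sum_exp V E x0 \<tau> S N
          = measure_pmf.expectation (walk_path V E x0 N) (\<lambda>p. \<Sum>i\<le>N. h (p ! i))"
  proof -
    have "integral\<^sup>L exp_clocks (\<lambda>e. \<Sum>i\<le>N. \<tau> (p ! i) * e i * indicator S (p ! i))
            = (\<Sum>i\<le>N. h (p ! i))" for p
    proof -
      have "(\<lambda>e. \<Sum>i\<le>N. \<tau> (p ! i) * e i * indicator S (p ! i)) = (\<lambda>e. \<Sum>i\<le>N. h (p ! i) * e i)"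
        by (simp add: h_def mult_ac)
      then show ?thesis by (simp add: integral_exp_clocks_sum)
    qed
    then show ?thesis unfolding trap_sum_exp_def by simp
  qed
  also have "\<dots> = (\<Sum>i\<le>N. measure_pmf.expectation (walk_path V E x0 N) (\<lambda>p. h (p ! i)))"
    by (rule Bochner_Integration.integral_sum)
       (auto intro!: measure_pmf.integrable_const_bound[where B="\<Sum>y\<in>V. \<bar>h y\<bar>"] simp: h_bound)
  also have "\<dots> = (\<Sum>i\<le>N. \<Sum>y\<in>V. h y * measure_pmf.prob (walk_path V E x0 i) {p. p ! i = y})"
  proof (rule sum.cong[OF refl])
    fix i assume "i \<in> {..N}"
    then show "measure_pmf.expectation (walk_path V E x0 N) (\<lambda>p. h (p ! i))
                 = (\<Sum>y\<in>V. h y * measure_pmf.prob (walk_path V E x0 i) {p. p ! i = y})"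
      by (intro expectation_walk_path_nth[OF assms(1) h_outside]) simp_all
  qed
  also have "\<dots> = (\<Sum>y\<in>V. h y * green V E (real N + 1) x0 y)"
    unfolding green_Suc_eq sum_distrib_left by (rule sum.swap)
  finally show ?thesis by (simp add: h_def)
qed

(* tau * 1{tau < A} = A * shallow_ratio A tau: the depth of a shallow trap in units of the threshold. *)
definition shallow_ratio :: "real \<Rightarrow> real \<Rightarrow> real" where
  "shallow_ratio A t = (if t < A then t / A else 0)"

lemma shallow_subset: "shallow V \<tau> \<alpha> g a \<subseteq> V"
  by (auto simp: shallow_def)

definition shallow_load ::
    "'v set \<Rightarrow> ('v \<Rightarrow> 'v \<Rightarrow> bool) \<Rightarrow> 'v \<Rightarrow> ('v \<Rightarrow> real) \<Rightarrow> real \<Rightarrow> nat \<Rightarrow> real"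
  where "shallow_load V E x0 \<tau> A N = (\<Sum>y\<in>V. green V E (real N + 1) x0 y * shallow_ratio A (\<tau> y))"

lemma trap_sum_exp_shallow_eq:
  assumes "finite V" and "0 < a powr (1 / \<alpha>) * g"
  shows "trap_sum_exp V E x0 \<tau> (shallow V \<tau> \<alpha> g a) N
           = a powr (1 / \<alpha>) * g * shallow_load V E x0 \<tau> (a powr (1 / \<alpha>) * g) N"
  unfolding trap_sum_exp_eq_green[OF assms(1) shallow_subset] shallow_load_def sum_distrib_left
  using assms(2) by (intro sum.cong refl) (auto simp: shallow_def shallow_ratio_def)

lemma trap_sum_exp_shallow_le:
  assumes "finite V" and "0 < a" and "0 \<le> d" and "0 < g"
    and "shallow_load V E x0 \<tau> (a powr (1 / \<alpha>) * g) N \<le> ((a + d) / a) powr (1 / \<alpha>) * f"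
  shows "trap_sum_exp V E x0 \<tau> (shallow V \<tau> \<alpha> g a) N \<le> (a + d) powr (1 / \<alpha>) * (f * g)"
proof -
  have A_pos: "0 < a powr (1 / \<alpha>) * g"
    using assms(2,4) by simp
  have "trap_sum_exp V E x0 \<tau> (shallow V \<tau> \<alpha> g a) N
          \<le> a powr (1 / \<alpha>) * g * (((a + d) / a) powr (1 / \<alpha>) * f)"
    unfolding trap_sum_exp_shallow_eq[OF assms(1) A_pos] using A_pos
    by (intro mult_left_mono assms(5)) simp
  also have "\<dots> = (a + d) powr (1 / \<alpha>) * (f * g)"
    using assms(2,3) by (simp add: powr_divide mult_ac)
  finally show ?thesis .
qed

lemma truncation_le_dyadic_sum:
  fixes y :: real
  assumes "0 < y"
  shows "(if y < 1 then y else 0)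
           \<le> (\<Sum>k<K. (1/4)^k * (if (1/4)^(k+1) \<le> y then 1 else 0)) + (1/4)^K"
proof (cases "y < 1")
  case False
  then show ?thesis by (auto intro!: add_nonneg_nonneg sum_nonneg)
next
  case True
  have "y \<le> (\<Sum>k<K. (1/4::real)^k * (if (1/4)^(k+1) \<le> y then 1 else 0)) + (1/4)^K"
  proof (induction K)
    case (Suc K)
    show ?case
    proof (cases "(1/4::real)^(K+1) \<le> y")
      case True
      then have "(\<Sum>k<Suc K. (1/4::real)^k * (if (1/4)^(k+1) \<le> y then 1 else 0)) + (1/4)^(Suc K)
          = (\<Sum>k<K. (1/4::real)^k * (if (1/4)^(k+1) \<le> y then 1 else 0)) + (1/4)^K + (1/4)^(Suc K)"
        by simp
      moreover have "(0::real) \<le> (1/4)^(Suc K)" by simp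
      ultimately show ?thesis using Suc.IH by linarith
    next
      case False
      have "0 \<le> (\<Sum>k<K. (1/4::real)^k * (if (1/4)^(k+1) \<le> y then 1 else 0))"
        by (auto intro!: sum_nonneg)
      with False show ?thesis by simp
    qed
  qed (use True in simp)
  with True show ?thesis by simp
qed

lemma integral_truncation_le_dyadic_sum:
  fixes Y :: "'w \<Rightarrow> real"
  assumes "prob_space P" and Y_meas: "Y \<in> borel_measurable P"
    and Y_pos: "\<And>\<omega>. \<omega> \<in> space P \<Longrightarrow> 0 < Y \<omega>"
  shows "integral\<^sup>L P (\<lambda>\<omega>. if Y \<omega> < 1 then Y \<omega> else 0)
           \<le> (\<Sum>k<K. (1/4)^k * measure P {\<omega>\<in>space P. (1/4)^(k+1) \<le> Y \<omega>}) + (1/4)^K"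
proof -
  interpret prob_space P by (rule assms(1))
  define I where "I k = {\<omega>\<in>space P. (1/4::real)^(k+1) \<le> Y \<omega>}" for k
  have I_sets: "I k \<in> sets P" for k
    unfolding I_def using Y_meas by measurable
  have integrable_I: "integrable P (\<lambda>\<omega>. (1/4::real)^k * indicator (I k) \<omega>)" for k
    using I_sets by (intro Bochner_Integration.integrable_mult_right integrable_real_indicator)
      (auto simp: emeasure_eq_measure)
  have "integral\<^sup>L P (\<lambda>\<omega>. if Y \<omega> < 1 then Y \<omega> else 0)
          \<le> integral\<^sup>L P (\<lambda>\<omega>. (\<Sum>k<K. (1/4)^k * indicator (I k) \<omega>) + (1/4)^K)"
  proof (rule integral_mono)
    show "integrable P (\<lambda>\<omega>. if Y \<omega> < 1 then Y \<omega> else 0)"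
    proof (rule integrable_const_bound[where B=1])
      show "AE \<omega> in P. norm (if Y \<omega> < 1 then Y \<omega> else 0) \<le> 1"
        by (rule AE_I2) (auto dest: Y_pos)
    qed (use Y_meas in auto)
    show "integrable P (\<lambda>\<omega>. (\<Sum>k<K. (1/4)^k * indicator (I k) \<omega>) + (1/4::real)^K)"
      using integrable_I
      by (intro Bochner_Integration.integrable_add Bochner_Integration.integrable_sum) auto
    fix \<omega> assume "\<omega> \<in> space P"
    then have "(\<Sum>k<K. (1/4::real)^k * indicator (I k) \<omega>)
                 = (\<Sum>k<K. (1/4)^k * (if (1/4)^(k+1) \<le> Y \<omega> then 1 else 0))"
      by (intro sum.cong) (auto simp: I_def)
    with truncation_le_dyadic_sum[OF Y_pos[OF \<open>\<omega> \<in> space P\<close>], of K]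
    show "(if Y \<omega> < 1 then Y \<omega> else 0) \<le> (\<Sum>k<K. (1/4)^k * indicator (I k) \<omega>) + (1/4)^K"
      by linarith
  qed
  also have "\<dots> = (\<Sum>k<K. (1/4)^k * measure P (I k)) + (1/4)^K"
  proof -
    have "integral\<^sup>L P (\<lambda>\<omega>. (\<Sum>k<K. (1/4)^k * indicator (I k) \<omega>) + (1/4::real)^K)
          = integral\<^sup>L P (\<lambda>\<omega>. \<Sum>k<K. (1/4)^k * indicator (I k) \<omega>)
            + integral\<^sup>L P (\<lambda>\<omega>. (1/4::real)^K)"
      by (rule Bochner_Integration.integral_add)
         (rule Bochner_Integration.integrable_sum, rule integrable_I, simp)
    also have "integral\<^sup>L P (\<lambda>\<omega>. \<Sum>k<K. (1/4)^k * indicator (I k) \<omega>)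
          = (\<Sum>k<K. integral\<^sup>L P (\<lambda>\<omega>. (1/4::real)^k * indicator (I k) \<omega>))"
      by (rule Bochner_Integration.integral_sum) (rule integrable_I)
    also have "\<dots> = (\<Sum>k<K. (1/4)^k * measure P (I k))"
      using I_sets by (intro sum.cong refl) simp
    finally show ?thesis by (simp add: prob_space)
  qed
  finally show ?thesis unfolding I_def .
qed

(* Layer cake over the levels 4^-(k+1): for alpha <= 1/2 the tail bound makes the k-th layer
   at most 2 q 2^-k, and the layers sum to at most 4 q. *)
lemma integral_truncation_le_of_tail:
  fixes Y :: "'w \<Rightarrow> real"
  assumes "prob_space P" and "Y \<in> borel_measurable P"
    and "\<And>\<omega>. \<omega> \<in> space P \<Longrightarrow> 0 < Y \<omega>"
    and "0 < \<alpha>" "\<alpha> \<le> 1/2"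
    and tail: "\<And>s. 0 < s \<Longrightarrow> s \<le> 1 \<Longrightarrow> measure P {\<omega>\<in>space P. s \<le> Y \<omega>} \<le> q / s powr \<alpha>"
  shows "integral\<^sup>L P (\<lambda>\<omega>. if Y \<omega> < 1 then Y \<omega> else 0) \<le> 4 * q"
proof (rule field_le_epsilon)
  have q_nonneg: "0 \<le> q"
    using order.trans[OF measure_nonneg tail[of 1]] by simp
  have dyadic_term: "(1/4::real)^k * measure P {\<omega>\<in>space P. (1/4)^(k+1) \<le> Y \<omega>} \<le> 2 * q * (1/2)^k"
    for k
  proof -
    have quarter_powr_half: "((1/4::real)^(k+1)) powr (1/2) = (1/2)^(k+1)"
    proof -
      have "(1/4::real)^(k+1) = ((1/2)^(k+1))^2"
        by (simp add: power2_eq_square power_mult_distrib[symmetric])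
      then show ?thesis by (simp add: powr_half_sqrt)
    qed
    have "measure P {\<omega>\<in>space P. (1/4)^(k+1) \<le> Y \<omega>} \<le> q / ((1/4::real)^(k+1)) powr \<alpha>"
      using power_le_one[of "1/4::real" k] by (intro tail) auto
    also have "\<dots> \<le> q / ((1/4::real)^(k+1)) powr (1/2)"
      using q_nonneg assms(4,5) power_le_one[of "1/4::real" "k+1"]
      by (intro divide_left_mono powr_mono' mult_pos_pos) auto
    also have "\<dots> = q * 2^(k+1)"
      unfolding quarter_powr_half by (simp add: power_one_over)
    finally have "(1/4::real)^k * measure P {\<omega>\<in>space P. (1/4)^(k+1) \<le> Y \<omega>}
                    \<le> (1/4)^k * (q * 2^(k+1))"
      by (intro mult_left_mono) auto
    also have "\<dots> = 2 * q * (1/2)^k"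
      by (simp add: power_one_over field_simps power_mult_distrib[symmetric])
    finally show ?thesis .
  qed
  have geometric: "(\<Sum>k<K. 2 * q * (1/2::real)^k) \<le> 4 * q" for K
  proof -
    have "(\<Sum>k<K. (1/2::real)^k) = 2 - 2 * (1/2)^K"
      by (induction K) (auto simp: power_one_over)
    then have "(\<Sum>k<K. (1/2::real)^k) \<le> 2" by simp
    then have "q * (\<Sum>k<K. (1/2::real)^k) \<le> q * 2"
      using q_nonneg by (rule mult_left_mono)
    then show ?thesis by (simp add: sum_distrib_left[symmetric] mult_ac)
  qed
  fix e :: real assume "0 < e"
  then obtain K where K: "(1/4::real)^K < e"
    using real_arch_pow_inv[of e "1/4"] by auto
  have "integral\<^sup>L P (\<lambda>\<omega>. if Y \<omega> < 1 then Y \<omega> else 0)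
          \<le> (\<Sum>k<K. (1/4)^k * measure P {\<omega>\<in>space P. (1/4)^(k+1) \<le> Y \<omega>}) + (1/4)^K"
    by (rule integral_truncation_le_dyadic_sum[OF assms(1-3)])
  also have "\<dots> \<le> (\<Sum>k<K. 2 * q * (1/2)^k) + (1/4)^K"
    by (intro add_right_mono sum_mono dyadic_term)
  finally show "integral\<^sup>L P (\<lambda>\<omega>. if Y \<omega> < 1 then Y \<omega> else 0) \<le> 4 * q + e"
    using geometric[of K] K by linarith
qed

lemma exp_mult_le_chord: "(0::real) \<le> x \<Longrightarrow> x \<le> 1 \<Longrightarrow> exp (c * x) \<le> 1 + x * (exp c - 1)"
  using convex_onD[OF exp_convex, of x 0 c] by (simp add: algebra_simps)

lemma integral_exp_le_of_mean:
  fixes X :: "'w \<Rightarrow> real"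
  assumes "prob_space P" and X_meas: "X \<in> borel_measurable P"
    and X_bounds: "\<And>\<omega>. \<omega> \<in> space P \<Longrightarrow> 0 \<le> X \<omega> \<and> X \<omega> \<le> 1"
    and mean: "integral\<^sup>L P X \<le> m" and "0 \<le> c"
  shows "integral\<^sup>L P (\<lambda>\<omega>. exp (c * X \<omega>)) \<le> exp (m * (exp c - 1))"
proof -
  interpret prob_space P by (rule assms(1))
  have X_int: "integrable P X"
    by (rule integrable_const_bound[where B=1]) (auto intro!: AE_I2 X_meas dest: X_bounds)
  have exp_int: "integrable P (\<lambda>\<omega>. exp (c * X \<omega>))"
  proof (rule integrable_const_bound[where B="exp c"])
    show "AE \<omega> in P. norm (exp (c * X \<omega>)) \<le> exp c"
      using X_bounds \<open>0 \<le> c\<close> by (intro AE_I2) (auto simp: mult_left_le)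
  qed (use X_meas in measurable)
  have "integral\<^sup>L P (\<lambda>\<omega>. exp (c * X \<omega>)) \<le> integral\<^sup>L P (\<lambda>\<omega>. 1 + X \<omega> * (exp c - 1))"
    using exp_int X_int by (intro integral_mono) (auto intro!: exp_mult_le_chord dest: X_bounds)
  also have "\<dots> = 1 + integral\<^sup>L P X * (exp c - 1)"
    using X_int by (simp add: prob_space)
  also have "\<dots> \<le> 1 + m * (exp c - 1)"
    using mean \<open>0 \<le> c\<close> by (intro add_left_mono mult_right_mono) auto
  also have "\<dots> \<le> exp (m * (exp c - 1))"
    by (rule exp_ge_add_one_self[THEN order.trans[rotated]]) simp
  finally show ?thesis .
qed

lemma integral_prod_exp_le:
  fixes X :: "'i \<Rightarrow> 'w \<Rightarrow> real" and G :: "'i \<Rightarrow> real"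
  assumes "prob_space P" and "finite I" and indep: "prob_space.indep_vars P (\<lambda>_. borel) X I"
    and X_bounds: "\<And>i \<omega>. i \<in> I \<Longrightarrow> \<omega> \<in> space P \<Longrightarrow> 0 \<le> X i \<omega> \<and> X i \<omega> \<le> 1"
    and mean: "\<And>i. i \<in> I \<Longrightarrow> integral\<^sup>L P (X i) \<le> m"
    and G_nonneg: "\<And>i. i \<in> I \<Longrightarrow> 0 \<le> G i" and "0 \<le> lam"
  shows "integrable P (\<lambda>\<omega>. \<Prod>i\<in>I. exp (lam * G i * X i \<omega>))"
    and "integral\<^sup>L P (\<lambda>\<omega>. \<Prod>i\<in>I. exp (lam * G i * X i \<omega>))
           \<le> exp (m * (\<Sum>i\<in>I. exp (lam * G i) - 1))"
proof -
  interpret prob_space P by (rule assms(1))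
  define Z where "Z i \<omega> = exp (lam * G i * X i \<omega>)" for i \<omega>
  have X_meas: "i \<in> I \<Longrightarrow> X i \<in> borel_measurable P" for i
    using indep unfolding indep_vars_def by auto
  have Z_le: "Z i \<omega> \<le> exp (lam * G i)" if "i \<in> I" "\<omega> \<in> space P" for i \<omega>
    using X_bounds[OF that] G_nonneg[OF that(1)] \<open>0 \<le> lam\<close>
    by (auto simp: Z_def mult_left_le)
  have Z_int: "integrable P (Z i)" if "i \<in> I" for i
  proof (rule integrable_const_bound[where B="exp (lam * G i)"])
    show "AE \<omega> in P. norm (Z i \<omega>) \<le> exp (lam * G i)"
      using Z_le[OF that] by (intro AE_I2) (simp add: Z_def)
    show "Z i \<in> borel_measurable P"
      unfolding Z_def using X_meas[OF that] by measurable
  qed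
  have Z_indep: "indep_vars (\<lambda>_. borel) Z I"
    unfolding Z_def using indep_vars_compose2[OF indep, of "\<lambda>i y. exp (lam * G i * y)"] by simp
  show "integrable P (\<lambda>\<omega>. \<Prod>i\<in>I. exp (lam * G i * X i \<omega>))"
    using indep_vars_integrable[OF \<open>finite I\<close> Z_indep Z_int] by (simp add: Z_def)
  have "integral\<^sup>L P (\<lambda>\<omega>. \<Prod>i\<in>I. Z i \<omega>) = (\<Prod>i\<in>I. integral\<^sup>L P (Z i))"
    by (rule indep_vars_lebesgue_integral[OF \<open>finite I\<close> Z_indep Z_int])
  also have "\<dots> \<le> (\<Prod>i\<in>I. exp (m * (exp (lam * G i) - 1)))"
  proof (rule prod_mono)
    fix i assume "i \<in> I"
    have "integral\<^sup>L P (Z i) \<le> exp (m * (exp (lam * G i) - 1))"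
      unfolding Z_def using mean[OF \<open>i \<in> I\<close>] G_nonneg[OF \<open>i \<in> I\<close>] \<open>0 \<le> lam\<close>
      by (intro integral_exp_le_of_mean[OF assms(1) X_meas[OF \<open>i \<in> I\<close>]] X_bounds[OF \<open>i \<in> I\<close>])
         auto
    moreover have "0 \<le> integral\<^sup>L P (Z i)"
      by (simp add: Z_def)
    ultimately show "0 \<le> integral\<^sup>L P (Z i) \<and> integral\<^sup>L P (Z i) \<le> exp (m * (exp (lam * G i) - 1))"
      by simp
  qed
  also have "\<dots> = exp (m * (\<Sum>i\<in>I. exp (lam * G i) - 1))"
    by (simp add: exp_sum[OF \<open>finite I\<close>, symmetric] sum_distrib_left)
  finally show "integral\<^sup>L P (\<lambda>\<omega>. \<Prod>i\<in>I. exp (lam * G i * X i \<omega>))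
                  \<le> exp (m * (\<Sum>i\<in>I. exp (lam * G i) - 1))"
    by (simp add: Z_def)
qed

lemma prob_weighted_sum_ge_le:
  fixes X :: "'i \<Rightarrow> 'w \<Rightarrow> real" and G :: "'i \<Rightarrow> real"
  assumes "prob_space P" and "finite I" and indep: "prob_space.indep_vars P (\<lambda>_. borel) X I"
    and X_bounds: "\<And>i \<omega>. i \<in> I \<Longrightarrow> \<omega> \<in> space P \<Longrightarrow> 0 \<le> X i \<omega> \<and> X i \<omega> \<le> 1"
    and mean: "\<And>i. i \<in> I \<Longrightarrow> integral\<^sup>L P (X i) \<le> m"
    and G_nonneg: "\<And>i. i \<in> I \<Longrightarrow> 0 \<le> G i" and "0 < lam"
  shows "measure P {\<omega>\<in>space P. M \<le> (\<Sum>i\<in>I. G i * X i \<omega>)}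
           \<le> exp (m * (\<Sum>i\<in>I. exp (lam * G i) - 1) - lam * M)"
proof -
  have prod_int: "integrable P (\<lambda>\<omega>. \<Prod>i\<in>I. exp (lam * G i * X i \<omega>))"
    and prod_bound: "integral\<^sup>L P (\<lambda>\<omega>. \<Prod>i\<in>I. exp (lam * G i * X i \<omega>))
                       \<le> exp (m * (\<Sum>i\<in>I. exp (lam * G i) - 1))"
    using assms(4-7) by (auto intro!: integral_prod_exp_le[OF assms(1-3)])
  have prod_eq: "(\<Prod>i\<in>I. exp (lam * G i * X i \<omega>)) = exp (lam * (\<Sum>i\<in>I. G i * X i \<omega>))" for \<omega>
    by (simp add: exp_sum[OF \<open>finite I\<close>, symmetric] sum_distrib_left mult_ac)
  have "measure P {\<omega>\<in>space P. M \<le> (\<Sum>i\<in>I. G i * X i \<omega>)}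
          = measure P {\<omega>\<in>space P. exp (lam * M) \<le> (\<Prod>i\<in>I. exp (lam * G i * X i \<omega>))}"
    unfolding prod_eq using \<open>0 < lam\<close> by simp
  also have "\<dots> \<le> integral\<^sup>L P (\<lambda>\<omega>. \<Prod>i\<in>I. exp (lam * G i * X i \<omega>)) / exp (lam * M)"
    by (rule integral_Markov_inequality_measure[OF prod_int, where A="space P"])
       (auto intro!: AE_I2 prod_nonneg)
  also have "\<dots> \<le> exp (m * (\<Sum>i\<in>I. exp (lam * G i) - 1)) / exp (lam * M)"
    by (rule divide_right_mono[OF prod_bound]) simp
  finally show ?thesis by (simp add: exp_diff)
qed

lemma integral_shallow_ratio_le_of_tail:
  fixes t :: "'w \<Rightarrow> real"
  assumes "prob_space P" and "t \<in> borel_measurable P"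
    and "\<And>\<omega>. \<omega> \<in> space P \<Longrightarrow> 0 < t \<omega>" and "0 < A" and "0 < \<alpha>" "\<alpha> \<le> 1/2"
    and tail: "\<And>s. 0 < s \<Longrightarrow> s \<le> 1 \<Longrightarrow> measure P {\<omega>\<in>space P. s * A \<le> t \<omega>} \<le> q / s powr \<alpha>"
  shows "integral\<^sup>L P (\<lambda>\<omega>. shallow_ratio A (t \<omega>)) \<le> 4 * q"
proof -
  have ratio_eq: "shallow_ratio A (t \<omega>) = (if t \<omega> / A < 1 then t \<omega> / A else 0)" for \<omega>
    using \<open>0 < A\<close> by (simp add: shallow_ratio_def)
  show ?thesis
    unfolding ratio_eq
  proof (rule integral_truncation_le_of_tail[OF assms(1) _ _ assms(5,6)])
    show "(\<lambda>\<omega>. t \<omega> / A) \<in> borel_measurable P"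
      using assms(2) by measurable
    show "\<And>\<omega>. \<omega> \<in> space P \<Longrightarrow> 0 < t \<omega> / A"
      using assms(3,4) by simp
    fix s :: real assume "0 < s" "s \<le> 1"
    have "{\<omega>\<in>space P. s \<le> t \<omega> / A} = {\<omega>\<in>space P. s * A \<le> t \<omega>}"
      using \<open>0 < A\<close> by (auto simp: field_simps)
    then show "measure P {\<omega>\<in>space P. s \<le> t \<omega> / A} \<le> q / s powr \<alpha>"
      using tail[OF \<open>0 < s\<close> \<open>s \<le> 1\<close>] by simp
  qed
qed

lemma prob_weighted_shallow_sum_ge_le:
  fixes t :: "'w \<Rightarrow> 'v \<Rightarrow> real" and G :: "'v \<Rightarrow> real"
  assumes "prob_space P" and "finite V"
    and indep: "prob_space.indep_vars P (\<lambda>_. borel) (\<lambda>x \<omega>. t \<omega> x) V"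
    and t_pos: "\<And>\<omega> x. \<omega> \<in> space P \<Longrightarrow> x \<in> V \<Longrightarrow> 0 < t \<omega> x"
    and "0 < A" and "0 < \<alpha>" "\<alpha> \<le> 1/2" and "0 < lam"
    and G_nonneg: "\<And>x. x \<in> V \<Longrightarrow> 0 \<le> G x"
    and tail: "\<And>x s. x \<in> V \<Longrightarrow> 0 < s \<Longrightarrow> s \<le> 1 \<Longrightarrow>
                 measure P {\<omega>\<in>space P. s * A \<le> t \<omega> x} \<le> q / s powr \<alpha>"
  shows "measure P {\<omega>\<in>space P. M \<le> (\<Sum>x\<in>V. G x * shallow_ratio A (t \<omega> x))}
           \<le> exp (4 * q * (\<Sum>x\<in>V. exp (lam * G x) - 1) - lam * M)"
proof (rule prob_weighted_sum_ge_le[OF assms(1,2) _ _ _ G_nonneg \<open>0 < lam\<close>])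
  interpret prob_space P by (rule assms(1))
  have "indep_vars (\<lambda>_. borel) (\<lambda>x \<omega>. (\<lambda>y. shallow_ratio A y) ((\<lambda>\<omega>. t \<omega> x) \<omega>)) V"
    by (rule indep_vars_compose2[OF indep]) (simp add: shallow_ratio_def)
  then show "indep_vars (\<lambda>_. borel) (\<lambda>x \<omega>. shallow_ratio A (t \<omega> x)) V"
    by simp
  show "0 \<le> shallow_ratio A (t \<omega> x) \<and> shallow_ratio A (t \<omega> x) \<le> 1" if "x \<in> V" "\<omega> \<in> space P" for x \<omega>
    using t_pos[OF that(2,1)] \<open>0 < A\<close> by (simp add: shallow_ratio_def)
  show "integral\<^sup>L P (\<lambda>\<omega>. shallow_ratio A (t \<omega> x)) \<le> 4 * q" if "x \<in> V" for x
    using indep that t_pos \<open>0 < A\<close> assms(6,7) tail[OF that]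
    by (intro integral_shallow_ratio_le_of_tail[OF assms(1)]) (auto simp: indep_vars_def)
qed

lemma borel_measurable_shallow_load:
  assumes "\<And>x. x \<in> V \<Longrightarrow> (\<lambda>\<omega>. t \<omega> x) \<in> borel_measurable M"
  shows "(\<lambda>\<omega>. shallow_load V E x0 (t \<omega>) A N) \<in> borel_measurable M"
  unfolding shallow_load_def
proof (rule borel_measurable_sum)
  fix x assume "x \<in> V"
  show "(\<lambda>\<omega>. green V E (real N + 1) x0 x * shallow_ratio A (t \<omega> x)) \<in> borel_measurable M"
    unfolding shallow_ratio_def using assms[OF \<open>x \<in> V\<close>] by measurable
qed

lemma prob_shallow_load_ge_le:
  fixes t :: "'w \<Rightarrow> 'v \<Rightarrow> real"
  assumes "prob_space P" and "finite V"
    and indep: "prob_space.indep_vars P (\<lambda>_. borel) (\<lambda>x \<omega>. t \<omega> x) V"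
    and t_pos: "\<And>\<omega> x. \<omega> \<in> space P \<Longrightarrow> x \<in> V \<Longrightarrow> 0 < t \<omega> x"
    and tail: "\<And>s x. 0 < s \<Longrightarrow> x \<in> V \<Longrightarrow>
       measure P {\<omega> \<in> space P. t \<omega> x \<ge> a powr (1 / \<alpha>) * s * g} \<le> C * b / (a * s powr \<alpha>)"
    and "0 < a" "0 < g" "0 < \<alpha>" "\<alpha> \<le> 1/2" "0 \<le> C" "0 \<le> b" "0 < lam" and "real N < r"
  shows "measure P {\<omega>\<in>space P. M \<le> shallow_load V E x0 (t \<omega>) (a powr (1 / \<alpha>) * g) N}
           \<le> exp (4 * (C * b / a) * (\<Sum>x\<in>V. exp (lam * green V E r x0 x) - 1) - lam * M)"
proof -
  define G where "G x = green V E (real N + 1) x0 x" for x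
  have G_nonneg: "0 \<le> G x" for x
    unfolding G_def green_def by (intro sum_nonneg) simp
  have "measure P {\<omega>\<in>space P. M \<le> shallow_load V E x0 (t \<omega>) (a powr (1 / \<alpha>) * g) N}
          \<le> exp (4 * (C * b / a) * (\<Sum>x\<in>V. exp (lam * G x) - 1) - lam * M)"
    unfolding shallow_load_def G_def[symmetric]
  proof (rule prob_weighted_shallow_sum_ge_le[OF assms(1,2) indep t_pos _ \<open>0 < \<alpha>\<close> \<open>\<alpha> \<le> 1/2\<close>
        \<open>0 < lam\<close> G_nonneg])
    show "0 < a powr (1 / \<alpha>) * g"
      using \<open>0 < a\<close> \<open>0 < g\<close> by simp
    fix x and s :: real assume "x \<in> V" "0 < s" "s \<le> 1"
    have "measure P {\<omega>\<in>space P. s * (a powr (1 / \<alpha>) * g) \<le> t \<omega> x}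
            = measure P {\<omega> \<in> space P. t \<omega> x \<ge> a powr (1 / \<alpha>) * s * g}"
      by (simp add: mult_ac)
    also have "\<dots> \<le> C * b / a / s powr \<alpha>"
      using tail[OF \<open>0 < s\<close> \<open>x \<in> V\<close>] by simp
    finally show "measure P {\<omega>\<in>space P. s * (a powr (1 / \<alpha>) * g) \<le> t \<omega> x} \<le> C * b / a / s powr \<alpha>" .
  qed
  also have "\<dots> \<le> exp (4 * (C * b / a) * (\<Sum>x\<in>V. exp (lam * green V E r x0 x) - 1) - lam * M)"
    unfolding G_def using assms(6,10-13) green_Suc_le[OF \<open>real N < r\<close>]
    by (intro exp_mono diff_right_mono mult_left_mono sum_mono) auto
  finally show ?thesis .
qed

lemma eventually_le_powr_inverse:
  fixes \<alpha> :: "nat \<Rightarrow> real"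
  assumes "1 < c" and "\<And>n. 0 < \<alpha> n" and "\<alpha> \<longlonglongrightarrow> 0"
  shows "\<forall>\<^sub>F n in sequentially. K \<le> c powr (1 / \<alpha> n)"
proof -
  have "\<forall>\<^sub>F n in sequentially. \<alpha> n < ln c / (\<bar>K\<bar> + 1)"
    using assms(1) by (intro order_tendstoD(2)[OF assms(3)]) simp
  then show ?thesis
  proof (rule eventually_mono)
    fix n assume "\<alpha> n < ln c / (\<bar>K\<bar> + 1)"
    then have "\<bar>K\<bar> + 1 < ln c / \<alpha> n"
      using assms(2)[of n] by (simp add: field_simps)
    also have "\<dots> \<le> exp (ln c / \<alpha> n)"
      using exp_ge_add_one_self[of "ln c / \<alpha> n"] by linarith
    also have "\<dots> = c powr (1 / \<alpha> n)"
      using assms(1) by (simp add: powr_def)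
    finally show "K \<le> c powr (1 / \<alpha> n)" by simp
  qed
qed

lemma AE_eventually_notin_of_summable:
  assumes "prob_space M" and sets: "\<And>n. B n \<in> sets M"
    and bound: "\<forall>\<^sub>F n in sequentially. measure M (B n) \<le> u n" and "summable u"
  shows "AE \<omega> in M. \<forall>\<^sub>F n in sequentially. \<omega> \<notin> B n"
proof -
  interpret prob_space M by (rule assms(1))
  have "summable (\<lambda>n. measure M (B n))"
    by (rule summable_comparison_test_ev[OF _ \<open>summable u\<close>])
       (use bound in \<open>auto elim: eventually_mono\<close>)
  then have "AE \<omega> in M. \<forall>\<^sub>F n in sequentially. \<omega> \<in> space M - B n"
    using borel_cantelli_AE1[OF sets] by (simp add: emeasure_eq_measure)
  then show ?thesis
    by eventually_elim (auto elim: eventually_mono)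
qed

lemma eventually_prob_shallow_load_ge_le:
  fixes V :: "nat \<Rightarrow> 'v set" and \<tau> :: "nat \<Rightarrow> 'w \<Rightarrow> 'v \<Rightarrow> real"
    and \<alpha> b g f lam :: "nat \<Rightarrow> real"
  assumes "prob_space P" and "\<And>n. finite (V n)"
    and tau_pos: "\<And>n \<omega> x. \<omega> \<in> space P \<Longrightarrow> x \<in> V n \<Longrightarrow> 0 < \<tau> n \<omega> x"
    and tau_indep: "\<And>n. prob_space.indep_vars P (\<lambda>_. borel) (\<lambda>x \<omega>. \<tau> n \<omega> x) (V n)"
    and tail: "\<And>s n x. 0 < s \<Longrightarrow> x \<in> V n \<Longrightarrow>
       measure P {\<omega> \<in> space P. \<tau> n \<omega> x \<ge> a powr (1 / \<alpha> n) * s * g n} \<le> C * b n / (a * s powr \<alpha> n)"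
    and alpha_pos: "\<And>n. 0 < \<alpha> n" and alpha_lim: "\<alpha> \<longlonglongrightarrow> 0" and b_pos: "\<And>n. 0 < b n"
    and g_lim: "filterlim g at_top sequentially" and f_lim: "filterlim f at_top sequentially"
    and green_exp_sum: "\<forall>T'>0. \<forall>\<^sub>F n in sequentially.
       (\<Sum>x\<in>V n. exp (lam n * green (V n) (E n) (T' * (f n / b n)) (x0 n) x) - 1)
          \<le> K_s * lam n * T' * (f n / b n)"
    and lam_pos: "\<And>n. 0 < lam n" and "0 \<le> C" and "0 < a" and "0 < d" and "0 < T"
  shows "\<forall>\<^sub>F n in sequentially.
           measure P {\<omega>\<in>space P. ((a + d) / a) powr (1 / \<alpha> n) * f n
              \<le> shallow_load (V n) (E n) (x0 n) (\<tau> n \<omega>) (a powr (1 / \<alpha> n) * g n)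
                   (nat \<lfloor>T * (f n / b n)\<rfloor>)}
           \<le> exp (- c * lam n * f n)"
proof -
  \<comment> \<open>the Chernoff exponent below is at most (K - Mq) * lam n * f n\<close>
  define K where "K = 8 * C * K_s * T / a"
  have "0 < 2 * T"
    using \<open>0 < T\<close> by simp
  have "\<forall>\<^sub>F n in sequentially. \<alpha> n \<le> 1/2"
    using order_tendstoD(2)[OF alpha_lim, of "1/2"] by (auto elim: eventually_mono)
  moreover have "\<forall>\<^sub>F n in sequentially. 0 < g n" "\<forall>\<^sub>F n in sequentially. 0 < f n"
    using g_lim f_lim by (simp_all add: filterlim_at_top_dense)
  moreover have "\<forall>\<^sub>F n in sequentially. K + c \<le> ((a + d) / a) powr (1 / \<alpha> n)"
    using \<open>0 < a\<close> \<open>0 < d\<close> by (intro eventually_le_powr_inverse alpha_pos alpha_lim) simp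
  ultimately show ?thesis
    using green_exp_sum[rule_format, OF \<open>0 < 2 * T\<close>]
  proof eventually_elim
    case (elim n)
    define r where "r = f n / b n"
    define Mq where "Mq = ((a + d) / a) powr (1 / \<alpha> n)"
    have "0 < T * r"
      using elim \<open>0 < T\<close> b_pos[of n] by (simp add: r_def)
    then have "real (nat \<lfloor>T * r\<rfloor>) < 2 * T * r"
      by linarith
    then have "measure P {\<omega>\<in>space P. Mq * f n
                 \<le> shallow_load (V n) (E n) (x0 n) (\<tau> n \<omega>) (a powr (1 / \<alpha> n) * g n) (nat \<lfloor>T * r\<rfloor>)}
           \<le> exp (4 * (C * b n / a)
                    * (\<Sum>x\<in>V n. exp (lam n * green (V n) (E n) (2 * T * r) (x0 n) x) - 1)
                  - lam n * (Mq * f n))"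
      using elim \<open>0 \<le> C\<close> \<open>0 < a\<close> alpha_pos[of n] b_pos[of n] lam_pos[of n]
      by (intro prob_shallow_load_ge_le[OF assms(1,2) tau_indep tau_pos tail]) auto
    also have "\<dots> \<le> exp (4 * (C * b n / a) * (K_s * lam n * (2 * T) * r) - lam n * (Mq * f n))"
      unfolding r_def using elim \<open>0 \<le> C\<close> \<open>0 < a\<close> b_pos[of n]
      by (intro exp_mono diff_right_mono mult_left_mono) auto
    also have "\<dots> \<le> exp (- c * lam n * f n)"
    proof (rule exp_mono)
      have "(K + c) * (lam n * f n) \<le> Mq * (lam n * f n)"
        using elim lam_pos[of n] by (intro mult_right_mono) (auto simp: Mq_def)
      then show "4 * (C * b n / a) * (K_s * lam n * (2 * T) * r) - lam n * (Mq * f n)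
                   \<le> - c * lam n * f n"
        using b_pos[of n] \<open>0 < a\<close> by (simp add: K_def r_def field_simps)
    qed
    finally show ?case by (simp add: Mq_def r_def)
  qed
qed

theorem proposition2:
  fixes V :: "nat \<Rightarrow> 'v set" and E :: "nat \<Rightarrow> 'v \<Rightarrow> 'v \<Rightarrow> bool" and x0 :: "nat \<Rightarrow> 'v"
    and P :: "'w measure" and \<tau> :: "nat \<Rightarrow> 'w \<Rightarrow> 'v \<Rightarrow> real"
    and \<alpha> b g f lam :: "nat \<Rightarrow> real" and K_G K_r K_s :: real
    and a d T \<delta> :: real
  assumes
    \<comment> \<open>finite connected simple graphs with root x0 n\<close>
    graph_fin: "\<And>n. finite (V n)"
    and root: "\<And>n. x0 n \<in> V n"
    and edges_in: "\<And>n x y. E n x y \<Longrightarrow> x \<in> V n \<and> y \<in> V n"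
    and edges_sym: "\<And>n x y. E n x y \<Longrightarrow> E n y x"
    and edges_irrefl: "\<And>n x. \<not> E n x x"
    and connected: "\<And>n x y. x \<in> V n \<Longrightarrow> y \<in> V n \<Longrightarrow> (E n)\<^sup>*\<^sup>* x y"
    \<comment> \<open>environment: positive depths, i.i.d. within each n, independent across n\<close>
    and P_prob: "prob_space P"
    and tau_meas: "\<And>n x. x \<in> V n \<Longrightarrow> (\<lambda>\<omega>. \<tau> n \<omega> x) \<in> borel_measurable P"
    and tau_pos: "\<And>n \<omega> x. \<omega> \<in> space P \<Longrightarrow> x \<in> V n \<Longrightarrow> \<tau> n \<omega> x > 0"
    and tau_indep: "\<And>n. prob_space.indep_vars P (\<lambda>_. borel) (\<lambda>x \<omega>. \<tau> n \<omega> x) (V n)"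
    and tau_ident: "\<And>n x y. x \<in> V n \<Longrightarrow> y \<in> V n \<Longrightarrow>
                       distr P borel (\<lambda>\<omega>. \<tau> n \<omega> x) = distr P borel (\<lambda>\<omega>. \<tau> n \<omega> y)"
    and tau_indep_n: "prob_space.indep_vars P (\<lambda>n. PiM (V n) (\<lambda>_. borel))
                        (\<lambda>n \<omega>. restrict (\<tau> n \<omega>) (V n)) UNIV"
    \<comment> \<open>Condition A\<close>
    and alpha_pos: "\<And>n. \<alpha> n > 0" and b_pos: "\<And>n. b n > 0"
    and alpha_lim: "\<alpha> \<longlonglongrightarrow> 0" and b_lim: "b \<longlonglongrightarrow> 0"
    and g_lim: "filterlim g at_top sequentially"
    and condA_lim: "\<And>K. compact K \<Longrightarrow> K \<subseteq> {0<..} \<Longrightarrow> \<forall>\<epsilon>>0. \<forall>\<^sub>F n in sequentially.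
         \<forall>u\<in>K. \<forall>x\<in>V n. \<bar>measure P {\<omega> \<in> space P. \<tau> n \<omega> x \<ge> u powr (1 / \<alpha> n) * g n} / b n
                         - 1 / u\<bar> < \<epsilon>"
    and condA_bound: "\<exists>C. \<forall>u>0. \<forall>d'>0. \<forall>n. \<forall>x\<in>V n.
         measure P {\<omega> \<in> space P. \<tau> n \<omega> x \<ge> u powr (1 / \<alpha> n) * d' * g n}
           \<le> C * b n / (u * d' powr \<alpha> n)"
    \<comment> \<open>Condition B\<close>
    and f_lim: "filterlim f at_top sequentially"
    and condB: "\<forall>\<rho>>0. AE \<omega> in cloud_space b \<rho>. \<forall>\<epsilon>>0. \<forall>\<^sub>F n in sequentially.
         \<forall>x\<in>cloud V \<omega> n.
            green_hit (V n) (E n) (cloud V \<omega> n - {x}) x x < \<infinity> \<and>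
            \<bar>enn2real (green_hit (V n) (E n) (cloud V \<omega> n - {x}) x x) / f n - K_G\<bar> < \<epsilon>"
    \<comment> \<open>Condition C (r_n = f_n / b_n)\<close>
    and K_r_pos: "K_r > 0"
    and condC: "\<forall>\<rho>>0. \<forall>s>0. AE \<omega> in cloud_space b \<rho>. \<forall>\<epsilon>>0. \<forall>\<^sub>F n in sequentially.
         \<forall>x\<in>cloud V \<omega> n \<union> {x0 n}.
            \<bar>hit_laplace (V n) (E n) (cloud V \<omega> n - {x}) x (s / (f n / b n))
               - K_r * \<rho> / (s + K_r * \<rho>)\<bar> < \<epsilon>"
    \<comment> \<open>Condition D\<close>
    and lambda_pos: "\<And>n. lam n > 0" and K_s_pos: "K_s > 0"
    and condD1: "\<forall>T'>0. \<forall>\<^sub>F n in sequentially.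
         (\<Sum>x\<in>V n. exp (lam n * green (V n) (E n) (T' * (f n / b n)) (x0 n) x) - 1)
            \<le> K_s * lam n * T' * (f n / b n)"
    and condD1_sum: "\<exists>c>0. summable (\<lambda>n. exp (- c * lam n * f n))"
    and condD2: "(\<lambda>n. \<alpha> n * ln (f n)) \<longlonglongrightarrow> 0"
    \<comment> \<open>parameters of the proposition\<close>
    and a_pos: "a > 0" and d_pos: "d > 0" and T_pos: "T > 0" and delta_pos: "\<delta> > 0"
  shows "AE \<omega> in P. \<forall>\<^sub>F n in sequentially.
           trap_sum_exp (V n) (E n) (x0 n) (\<tau> n \<omega>)
              (shallow (V n) (\<tau> n \<omega>) (\<alpha> n) (g n) a) (nat \<lfloor>T * (f n / b n)\<rfloor>)
           \<le> (a + d) powr (1 / \<alpha> n) * (f n * g n)"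
proof -
  obtain C where C: "\<And>u d' n x. 0 < u \<Longrightarrow> 0 < d' \<Longrightarrow> x \<in> V n \<Longrightarrow>
      measure P {\<omega> \<in> space P. \<tau> n \<omega> x \<ge> u powr (1 / \<alpha> n) * d' * g n} \<le> C * b n / (u * d' powr \<alpha> n)"
    using condA_bound by blast
  have "0 \<le> C"
    using order.trans[OF measure_nonneg C[of 1 1 "x0 0" 0]] root[of 0] b_pos[of 0]
    by (simp add: zero_le_mult_iff)
  obtain c where summable_c: "summable (\<lambda>n. exp (- c * lam n * f n))"
    using condD1_sum by blast
  define Bad where "Bad n = {\<omega>\<in>space P. ((a + d) / a) powr (1 / \<alpha> n) * f n
      \<le> shallow_load (V n) (E n) (x0 n) (\<tau> n \<omega>) (a powr (1 / \<alpha> n) * g n)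
           (nat \<lfloor>T * (f n / b n)\<rfloor>)}" for n
  have "Bad n \<in> sets P" for n
    using borel_measurable_shallow_load[OF tau_meas] unfolding Bad_def by measurable
  moreover have "\<forall>\<^sub>F n in sequentially. measure P (Bad n) \<le> exp (- c * lam n * f n)"
    unfolding Bad_def
    by (rule eventually_prob_shallow_load_ge_le[OF P_prob graph_fin tau_pos tau_indep C[OF a_pos]
          alpha_pos alpha_lim b_pos g_lim f_lim condD1 lambda_pos \<open>0 \<le> C\<close> a_pos d_pos T_pos])
  ultimately have "AE \<omega> in P. \<forall>\<^sub>F n in sequentially. \<omega> \<notin> Bad n"
    using summable_c by (intro AE_eventually_notin_of_summable[OF P_prob])
  then show ?thesis
    using AE_space
  proof eventually_elim
    case (elim \<omega>)
    from elim(1) g_lim[unfolded filterlim_at_top_dense, rule_format, of 0]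
    show ?case
      by eventually_elim
         (use elim(2) a_pos d_pos in \<open>auto simp: Bad_def intro!: trap_sum_exp_shallow_le graph_fin\<close>)
  qed
qed

end
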